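(* For every instance of the Balancing with Conflicts game with $n$ players and $m$ machines: - the price of total anarchy is at most $2-\frac1m+\frac{m-1}{n}$ if $n\ge m$; - it is at most $1+\frac{2n-2}{m}$ if $n<m$; - it is at most $3-\frac2m$ for every $n$.
   Context: An instance of the Balancing with Conflicts (BwC) game consists of: - players $N=\{1,\dots,n\}$; - machines $M=\{1,\dots,m\}$; - a simple undirected graph $G=(N,E)$. Each player chooses one machine, so a state is $\vec s\in M^n$. Let $X_k(\vec s)=\{i:s_i=k\}$ and $x_k(\vec s)=|X_k(\vec s)|$. For $X\subseteq N$, $e(X)$ is the number of edges with both endpoints in $X$, and $e(\{i\},X)$ is the number of neighbours of $i$ in $X$. The cost of player $i$ with $s_i=k$ is $c_i(\vec s)=x_k(\vec s)+e(\{i\},X_k(\vec s))$. The social cost is $$c(\vec s)=\sum_ic_i(\vec s)=\sum_k\big(x_k(\vec s)^2+2e(X_k(\vec s))\big),$$ and $\vec s^*$ minimizes $c$. A coarse correlated equilibrium (CCE) is a probability distribution $\sigma$ over states such that for every player $i$ and every machine $s_i'$, $$\mathbf E_{\vec s\sim\sigma}[c_i(\vec s)]\le\mathbf E_{\vec s\sim\sigma}[c_i(s_i',\vec s_{-i})].$$ The price of total anarchy of an instance is the supremum over all CCE $\sigma$ of $\mathbf E_{\vec s\sim\sigma}[c(\vec s)]/c(\vec s^* )$. *)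

theory Defs
  imports Complex_Main "HOL-Library.FuncSet"
begin

definition simple_graph :: "nat \<Rightarrow> (nat \<Rightarrow> nat \<Rightarrow> bool) \<Rightarrow> bool" where
  "simple_graph n E \<longleftrightarrow> (\<forall>i<n. \<forall>j<n. E i j \<longleftrightarrow> E j i) \<and> (\<forall>i<n. \<not> E i i)"

definition states :: "nat \<Rightarrow> nat \<Rightarrow> (nat \<Rightarrow> nat) set" where
  "states n m = ({..<n} \<rightarrow>\<^sub>E {..<m})"

definition load_set :: "nat \<Rightarrow> (nat \<Rightarrow> nat) \<Rightarrow> nat \<Rightarrow> nat set" where
  "load_set n s k = {j. j < n \<and> s j = k}"

definition player_cost :: "nat \<Rightarrow> (nat \<Rightarrow> nat \<Rightarrow> bool) \<Rightarrow> (nat \<Rightarrow> nat) \<Rightarrow> nat \<Rightarrow> real" where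
  "player_cost n E s i =
     real (card (load_set n s (s i))) + real (card {j \<in> load_set n s (s i). E i j})"

definition social_cost :: "nat \<Rightarrow> (nat \<Rightarrow> nat \<Rightarrow> bool) \<Rightarrow> (nat \<Rightarrow> nat) \<Rightarrow> real" where
  "social_cost n E s = (\<Sum>i<n. player_cost n E s i)"

definition opt_cost :: "nat \<Rightarrow> nat \<Rightarrow> (nat \<Rightarrow> nat \<Rightarrow> bool) \<Rightarrow> real" where
  "opt_cost n m E = Min (social_cost n E ` states n m)"

definition is_distribution :: "nat \<Rightarrow> nat \<Rightarrow> ((nat \<Rightarrow> nat) \<Rightarrow> real) \<Rightarrow> bool" where
  "is_distribution n m \<sigma> \<longleftrightarrow>
     (\<forall>s\<in>states n m. \<sigma> s \<ge> 0) \<and> (\<Sum>s\<in>states n m. \<sigma> s) = 1"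

definition is_CCE :: "nat \<Rightarrow> nat \<Rightarrow> (nat \<Rightarrow> nat \<Rightarrow> bool) \<Rightarrow> ((nat \<Rightarrow> nat) \<Rightarrow> real) \<Rightarrow> bool" where
  "is_CCE n m E \<sigma> \<longleftrightarrow> is_distribution n m \<sigma> \<and>
     (\<forall>i<n. \<forall>k<m.
        (\<Sum>s\<in>states n m. \<sigma> s * player_cost n E s i)
          \<le> (\<Sum>s\<in>states n m. \<sigma> s * player_cost n E (s(i := k)) i))"

definition expected_social_cost ::
  "nat \<Rightarrow> nat \<Rightarrow> (nat \<Rightarrow> nat \<Rightarrow> bool) \<Rightarrow> ((nat \<Rightarrow> nat) \<Rightarrow> real) \<Rightarrow> real" where
  "expected_social_cost n m E \<sigma> = (\<Sum>s\<in>states n m. \<sigma> s * social_cost n E s)"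

end

theory Submission
  imports Defs "HOL-Analysis.Convex"
begin

text \<open>Summing player \<open>i\<close>'s CCE inequality over all \<open>m\<close> deviations bounds \<open>m\<close> times its
  expected cost by \<open>m + n - 1 + deg i\<close>, so \<open>m \<cdot> E[c] \<le> n(m + n - 1) + 2|E|\<close>.  For an optimum
  with loads \<open>x\<^sub>k\<close> and conflict term \<open>Q = \<Sum>\<^sub>k 2e(X\<^sub>k)\<close>, every edge is either counted in \<open>Q\<close> or
  joins two machines, so \<open>2|E| \<le> Q + n\<^sup>2 - \<Sum>\<^sub>k x\<^sub>k\<^sup>2\<close>.  With \<open>\<Sum>\<^sub>k x\<^sub>k\<^sup>2 \<ge> n\<close> and, by
  Cauchy-Schwarz, \<open>m \<Sum>\<^sub>k x\<^sub>k\<^sup>2 \<ge> n\<^sup>2\<close>, the three bounds are elementary inequalities.\<close>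

declare sum_of_bool_eq [simp del]

definition load :: "nat \<Rightarrow> (nat \<Rightarrow> nat) \<Rightarrow> nat \<Rightarrow> real" where
  "load n s k = (\<Sum>j<n. of_bool (s j = k))"

definition conflicts :: "nat \<Rightarrow> (nat \<Rightarrow> nat \<Rightarrow> bool) \<Rightarrow> (nat \<Rightarrow> nat) \<Rightarrow> real" where
  "conflicts n E s = (\<Sum>i<n. \<Sum>j<n. of_bool (s j = s i \<and> E i j))"

definition degree :: "nat \<Rightarrow> (nat \<Rightarrow> nat \<Rightarrow> bool) \<Rightarrow> nat \<Rightarrow> real" where
  "degree n E i = (\<Sum>j<n. of_bool (E i j))"

lemma states_range: "s \<in> states n m \<Longrightarrow> j < n \<Longrightarrow> s j < m"
  unfolding states_def by auto

lemma finite_states: "finite (states n m)"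
  unfolding states_def by (simp add: finite_PiE)

lemma sum_of_bool_eq_single:
  assumes "a < (m::nat)"
  shows "(\<Sum>k<m. of_bool (a = k \<and> P)) = (of_bool P :: real)"
proof -
  have "(\<Sum>k<m. of_bool (a = k \<and> P)) = (\<Sum>k<m. if k = a then (of_bool P :: real) else 0)"
    by (rule sum.cong) auto
  then show ?thesis
    using assms by (simp add: sum.delta)
qed

lemma sum_of_bool_eq_one: "a < (m::nat) \<Longrightarrow> (\<Sum>k<m. of_bool (a = k)) = (1 :: real)"
  using sum_of_bool_eq_single[of a m True] by simp

lemma player_cost_eq:
  "player_cost n E s i = load n s (s i) + (\<Sum>j<n. of_bool (s j = s i \<and> E i j))"
proof -
  have "load_set n s (s i) = {..<n} \<inter> {j. s j = s i}"
    and "{j \<in> load_set n s (s i). E i j} = {..<n} \<inter> {j. s j = s i \<and> E i j}"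
    unfolding load_set_def by auto
  then show ?thesis
    unfolding player_cost_def load_def by (simp add: sum_of_bool_eq)
qed

lemma sum_load:
  assumes "s \<in> states n m"
  shows "(\<Sum>k<m. load n s k) = real n"
proof -
  have "(\<Sum>k<m. load n s k) = (\<Sum>j<n. \<Sum>k<m. of_bool (s j = k))"
    unfolding load_def by (rule sum.swap)
  also have "\<dots> = (\<Sum>j<n. 1)"
    using assms by (intro sum.cong) (auto simp: sum_of_bool_eq_one states_range)
  finally show ?thesis by simp
qed

lemma sum_load_of_players:
  assumes "s \<in> states n m"
  shows "(\<Sum>i<n. load n s (s i)) = (\<Sum>k<m. (load n s k)\<^sup>2)"
proof -
  have "(\<Sum>i<n. load n s (s i)) = (\<Sum>i<n. \<Sum>k<m. of_bool (s i = k) * load n s k)"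
    using assms by (intro sum.cong) (auto simp: states_range sum.If_cases)
  also have "\<dots> = (\<Sum>k<m. (\<Sum>i<n. of_bool (s i = k)) * load n s k)"
    by (subst sum.swap) (simp add: sum_distrib_right)
  finally show ?thesis
    by (simp add: load_def power2_eq_square)
qed

lemma players_le_sum_square_load:
  assumes "s \<in> states n m"
  shows "real n \<le> (\<Sum>k<m. (load n s k)\<^sup>2)"
proof -
  have "1 \<le> load n s (s i)" if "i < n" for i
    using that member_le_sum[of i "{..<n}" "\<lambda>j. of_bool (s j = s i) :: real"]
    by (simp add: load_def)
  then have "(\<Sum>i<n. 1) \<le> (\<Sum>i<n. load n s (s i))"
    by (intro sum_mono) simp
  then show ?thesis
    using sum_load_of_players[OF assms] by simp
qed

lemma square_players_le_sum_square_load: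
  assumes "s \<in> states n m"
  shows "(real n)\<^sup>2 \<le> real m * (\<Sum>k<m. (load n s k)\<^sup>2)"
  using Cauchy_Schwarz_ineq_sum[of "load n s" "\<lambda>_. 1" "{..<m}"]
  by (simp add: sum_load[OF assms] mult.commute)

lemma social_cost_eq:
  assumes "s \<in> states n m"
  shows "social_cost n E s = (\<Sum>k<m. (load n s k)\<^sup>2) + conflicts n E s"
  unfolding social_cost_def conflicts_def
  by (simp add: player_cost_eq sum.distrib sum_load_of_players[OF assms])

lemma conflicts_nonneg: "0 \<le> conflicts n E s"
  unfolding conflicts_def by (intro sum_nonneg) auto

lemma sum_degree_le:
  assumes "s \<in> states n m"
  shows "(\<Sum>i<n. degree n E i) \<le> conflicts n E s + (real n)\<^sup>2 - (\<Sum>k<m. (load n s k)\<^sup>2)"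
proof -
  have "(\<Sum>i<n. degree n E i)
      \<le> (\<Sum>i<n. \<Sum>j<n. of_bool (s j = s i \<and> E i j) + (1 - of_bool (s j = s i)))"
    unfolding degree_def by (intro sum_mono) auto
  also have "\<dots> = conflicts n E s + (real n)\<^sup>2 - (\<Sum>i<n. load n s (s i))"
    unfolding conflicts_def load_def
    by (simp add: sum.distrib sum_subtractf power2_eq_square)
  finally show ?thesis
    using sum_load_of_players[OF assms] by simp
qed

text \<open>Moving player \<open>i\<close> through all \<open>m\<close> machines meets every other player exactly once
  and \<open>i\<close> itself \<open>m\<close> times.\<close>

lemma sum_deviation_costs:
  assumes s: "s \<in> states n m" and i: "i < n" and G: "simple_graph n E"
  shows "(\<Sum>k<m. player_cost n E (s(i := k)) i) = real m + real n - 1 + degree n E i"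
proof -
  have meets: "(\<Sum>k<m. of_bool ((s(i := k)) j = k)) = (if j = i then real m else 1)"
    if "j < n" for j
    using that s by (simp add: sum_of_bool_eq_one states_range)
  have conflicts: "(\<Sum>k<m. of_bool ((s(i := k)) j = k \<and> E i j)) = (of_bool (E i j) :: real)"
    if "j < n" for j
  proof (cases "j = i")
    case True
    then show ?thesis using G i by (simp add: simple_graph_def)
  next
    case False
    then show ?thesis using that s by (simp add: sum_of_bool_eq_single states_range)
  qed
  have "(\<Sum>j<n. if j = i then real m else 1) = (\<Sum>j<n. 1 + (if j = i then real m - 1 else 0))"
    by (intro sum.cong) auto
  also have "\<dots> = real m + real n - 1"
    using i by (simp add: sum.distrib)
  finally have total: "(\<Sum>j<n. if j = i then real m else 1) = real m + real n - 1" .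
  have "(\<Sum>k<m. player_cost n E (s(i := k)) i)
      = (\<Sum>j<n. \<Sum>k<m. of_bool ((s(i := k)) j = k))
        + (\<Sum>j<n. \<Sum>k<m. of_bool ((s(i := k)) j = k \<and> E i j))"
    by (simp add: player_cost_eq load_def sum.distrib sum.swap[of _ "{..<m}"])
  also have "\<dots> = (\<Sum>j<n. if j = i then real m else 1) + (\<Sum>j<n. of_bool (E i j))"
    using meets conflicts by (intro arg_cong2[where f = "(+)"] sum.cong) auto
  also have "\<dots> = real m + real n - 1 + degree n E i"
    by (simp add: total degree_def)
  finally show ?thesis .
qed

lemma CCE_expected_cost_le:
  assumes cce: "is_CCE n m E \<sigma>" and G: "simple_graph n E"
  shows "real m * expected_social_cost n m E \<sigma>
      \<le> real n * (real m + real n - 1) + (\<Sum>i<n. degree n E i)"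
proof -
  let ?St = "states n m"
  have distribution: "(\<Sum>s\<in>?St. \<sigma> s) = 1"
    using cce by (simp add: is_CCE_def is_distribution_def)
  have player: "real m * (\<Sum>s\<in>?St. \<sigma> s * player_cost n E s i)
      \<le> real m + real n - 1 + degree n E i" if i: "i < n" for i
  proof -
    have "real m * (\<Sum>s\<in>?St. \<sigma> s * player_cost n E s i)
        \<le> (\<Sum>k<m. \<Sum>s\<in>?St. \<sigma> s * player_cost n E (s(i := k)) i)"
      using sum_mono[of "{..<m}" "\<lambda>_. \<Sum>s\<in>?St. \<sigma> s * player_cost n E s i"] cce i
      by (simp add: is_CCE_def)
    also have "\<dots> = (\<Sum>s\<in>?St. \<sigma> s * (\<Sum>k<m. player_cost n E (s(i := k)) i))"
      by (simp add: sum.swap[of _ "{..<m}"] sum_distrib_left)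
    also have "\<dots> = (\<Sum>s\<in>?St. \<sigma> s) * (real m + real n - 1 + degree n E i)"
      by (simp add: sum_deviation_costs[OF _ i G] sum_distrib_right)
    finally show ?thesis
      using distribution by simp
  qed
  have "real m * expected_social_cost n m E \<sigma>
      = (\<Sum>i<n. real m * (\<Sum>s\<in>?St. \<sigma> s * player_cost n E s i))"
    unfolding expected_social_cost_def social_cost_def
    by (simp add: sum_distrib_left sum.swap[of _ "{..<n}"] mult.assoc)
  also have "\<dots> \<le> (\<Sum>i<n. real m + real n - 1 + degree n E i)"
    by (intro sum_mono player) simp
  also have "\<dots> = real n * (real m + real n - 1) + (\<Sum>i<n. degree n E i)"
    by (simp add: sum.distrib)
  finally show ?thesis .
qed

lemma opt_cost_attained:
  assumes "m \<ge> 1"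
  obtains s where "s \<in> states n m" and "opt_cost n m E = social_cost n E s"
proof -
  have "(\<lambda>i\<in>{..<n}. 0) \<in> states n m"
    using assms by (auto simp: states_def)
  then have "opt_cost n m E \<in> social_cost n E ` states n m"
    unfolding opt_cost_def by (intro Min_in finite_imageI finite_states) auto
  then show ?thesis
    using that by auto
qed

text \<open>Below, \<open>X\<close> is the expected cost of a CCE and \<open>S + Q\<close> the optimal cost with
  \<open>S = \<Sum>\<^sub>k x\<^sub>k\<^sup>2\<close>.\<close>

lemma ratio_bound_many_players:
  fixes N M S Q X :: real
  assumes M: "M \<ge> 1" and NM: "N \<ge> M" and CS: "N\<^sup>2 \<le> M * S" and Q: "Q \<ge> 0"
    and X: "M * X \<le> N * (M + N - 1) + Q + N\<^sup>2 - S"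
  shows "X \<le> (2 - 1 / M + (M - 1) / N) * (S + Q)"
proof -
  have N: "N > 0" using M NM by linarith
  have "(2 * N + M - 1) * N\<^sup>2 \<le> (2 * N + M - 1) * (M * S)"
    using CS M N by (intro mult_left_mono) auto
  moreover have "0 \<le> (M - 1) * (2 * N + M) * Q"
    using M N Q by (intro mult_nonneg_nonneg) auto
  moreover have "N * (M * X) \<le> N * (N * (M + N - 1) + Q + N\<^sup>2 - S)"
    using X N by (intro mult_left_mono) auto
  ultimately have "(M * N) * X \<le> (2 * M * N - N + M * M - M) * (S + Q)"
    by (simp add: algebra_simps power2_eq_square)
  moreover have "(2 - 1 / M + (M - 1) / N) * (S + Q) = (2 * M * N - N + M * M - M) * (S + Q) / (M * N)"
    using M N by (simp add: field_simps)
  ultimately show ?thesis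
    using M N by (simp add: pos_le_divide_eq mult.commute)
qed

lemma ratio_bound_few_players:
  fixes N M S Q X :: real
  assumes M: "M \<ge> 1" and N: "N \<ge> 1" and S: "N \<le> S" and Q: "Q \<ge> 0"
    and X: "M * X \<le> N * (M + N - 1) + Q + N\<^sup>2 - S"
  shows "X \<le> (1 + (2 * N - 2) / M) * (S + Q)"
proof -
  have "(M + 2 * N - 1) * N \<le> (M + 2 * N - 1) * S"
    using S M N by (intro mult_left_mono) auto
  moreover have "0 \<le> (M + 2 * N - 3) * Q"
    using M N Q by (intro mult_nonneg_nonneg) auto
  ultimately have "M * X \<le> (M + 2 * N - 2) * (S + Q)"
    using X by (simp add: algebra_simps power2_eq_square)
  moreover have "(1 + (2 * N - 2) / M) * (S + Q) = (M + 2 * N - 2) * (S + Q) / M"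
    using M by (simp add: field_simps)
  ultimately show ?thesis
    using M by (simp add: pos_le_divide_eq mult.commute)
qed

lemma ratio_bound_uniform:
  fixes N M S Q X :: real
  assumes M: "M \<ge> 1" and N: "N \<ge> 1" and CS: "N\<^sup>2 \<le> M * S" and S: "N \<le> S" and Q: "Q \<ge> 0"
    and X: "M * X \<le> N * (M + N - 1) + Q + N\<^sup>2 - S"
  shows "X \<le> (3 - 2 / M) * (S + Q)"
proof (cases "N \<ge> M")
  case True
  have "(M - 1) / N \<le> (M - 1) / M"
    using True M by (intro divide_left_mono) auto
  also have "\<dots> = 1 - 1 / M"
    using M by (simp add: field_simps)
  finally have "(2 - 1 / M + (M - 1) / N) * (S + Q) \<le> (3 - 2 / M) * (S + Q)"
    using S N Q by (intro mult_right_mono) auto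
  then show ?thesis
    using ratio_bound_many_players[OF M True CS Q X] by linarith
next
  case False
  have "(2 * N - 2) / M \<le> (2 * M - 2) / M"
    using False M by (intro divide_right_mono) auto
  also have "\<dots> = 2 - 2 / M"
    using M by (simp add: field_simps)
  finally have "(1 + (2 * N - 2) / M) * (S + Q) \<le> (3 - 2 / M) * (S + Q)"
    using S N Q by (intro mult_right_mono) auto
  then show ?thesis
    using ratio_bound_few_players[OF M N S Q X] by linarith
qed

theorem corollary5:
  fixes n m :: nat and E :: "nat \<Rightarrow> nat \<Rightarrow> bool"
  assumes "n \<ge> 1" and "m \<ge> 1" and "simple_graph n E"
  shows "(n \<ge> m \<longrightarrow> (\<forall>\<sigma>. is_CCE n m E \<sigma> \<longrightarrow>
            expected_social_cost n m E \<sigma> \<le> (2 - 1 / real m + (real m - 1) / real n) * opt_cost n m E))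
       \<and> (n < m \<longrightarrow> (\<forall>\<sigma>. is_CCE n m E \<sigma> \<longrightarrow>
            expected_social_cost n m E \<sigma> \<le> (1 + (2 * real n - 2) / real m) * opt_cost n m E))
       \<and> (\<forall>\<sigma>. is_CCE n m E \<sigma> \<longrightarrow>
            expected_social_cost n m E \<sigma> \<le> (3 - 2 / real m) * opt_cost n m E)"
proof -
  obtain s where s: "s \<in> states n m" and opt: "opt_cost n m E = social_cost n E s"
    using opt_cost_attained assms(2) by blast
  define S where "S = (\<Sum>k<m. (load n s k)\<^sup>2)"
  define Q where "Q = conflicts n E s"
  have opt_eq: "opt_cost n m E = S + Q"
    unfolding opt S_def Q_def by (rule social_cost_eq[OF s])
  have X: "real m * expected_social_cost n m E \<sigma>
      \<le> real n * (real m + real n - 1) + Q + (real n)\<^sup>2 - S" if "is_CCE n m E \<sigma>" for \<sigma>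
    using CCE_expected_cost_le[OF that assms(3)] sum_degree_le[OF s, of E]
    unfolding S_def Q_def by linarith
  have M: "real m \<ge> 1" and N: "real n \<ge> 1"
    using assms by auto
  note S_bounds = square_players_le_sum_square_load[OF s, folded S_def]
    players_le_sum_square_load[OF s, folded S_def]
  have Q: "Q \<ge> 0"
    unfolding Q_def by (rule conflicts_nonneg)
  show ?thesis
    unfolding opt_eq
    using ratio_bound_many_players[OF M _ S_bounds(1) Q X]
      ratio_bound_few_players[OF M N S_bounds(2) Q X]
      ratio_bound_uniform[OF M N S_bounds Q X]
    by auto
qed

end
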